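(* Let $G$ be a $k$-connected chordal graph and let $T$ be a tree decomposition of $G$ in which the label $l(x)$ of every node $x\in V(T)$ induces a maximal clique of $G$. Let $M'=\{\,l(x)\cap l(y) : \{x,y\}\in E(T)\,\}$ and let $M''=\{\,Y\in M' : \text{there is no } Z\in M' \text{ with } Z\subsetneq Y\,\}$. Then $M''$ is exactly the set of minimal vertex separators of $G$.
   Context: A graph is chordal if it is simple and has no chordless cycle (a cycle of length at least 4 with no chord). A tree decomposition of $G$ is a tree $T$ with a label $l(x)\subseteq V(G)$ for each node $x$, such that every vertex of $G$ lies in some label, every edge of $G$ has both endpoints in some label, and for each $v\in V(G)$ the set of nodes whose labels contain $v$ induces a connected subtree of $T$. A vertex separator of $G$ is a set $S\subseteq V(G)$ such that $G-S$ is disconnected; it is a minimal vertex separator if no proper subset of $S$ is a vertex separator. *)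

theory Defs
  imports Main
begin

definition simple_graph :: "'a set \<Rightarrow> 'a set set \<Rightarrow> bool" where
  "simple_graph V E \<longleftrightarrow> finite V \<and>
     (\<forall>e\<in>E. \<exists>u v. u \<noteq> v \<and> e = {u, v} \<and> u \<in> V \<and> v \<in> V)"

text \<open>Connectivity of the subgraph induced by S (the empty set counts as connected).\<close>
definition connected_on :: "'a set set \<Rightarrow> 'a set \<Rightarrow> bool" where
  "connected_on E S \<longleftrightarrow>
     (\<forall>u\<in>S. \<forall>v\<in>S. (u, v) \<in> {(x, y). {x, y} \<in> E \<and> x \<in> S \<and> y \<in> S}\<^sup>*)"

definition is_cycle :: "'a set set \<Rightarrow> 'a list \<Rightarrow> bool" where
  "is_cycle E vs \<longleftrightarrow> distinct vs \<and> length vs \<ge> 3 \<and>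
     (\<forall>i < length vs. {vs ! i, vs ! ((i + 1) mod length vs)} \<in> E)"

definition chordless :: "'a set set \<Rightarrow> 'a list \<Rightarrow> bool" where
  "chordless E vs \<longleftrightarrow>
     (\<forall>i < length vs. \<forall>j < length vs. {vs ! i, vs ! j} \<in> E \<longrightarrow>
        j = (i + 1) mod length vs \<or> i = (j + 1) mod length vs)"

definition chordal :: "'a set \<Rightarrow> 'a set set \<Rightarrow> bool" where
  "chordal V E \<longleftrightarrow> simple_graph V E \<and>
     \<not> (\<exists>vs. set vs \<subseteq> V \<and> is_cycle E vs \<and> length vs \<ge> 4 \<and> chordless E vs)"

definition clique :: "'a set \<Rightarrow> 'a set set \<Rightarrow> 'a set \<Rightarrow> bool" where
  "clique V E C \<longleftrightarrow> C \<subseteq> V \<and> (\<forall>u\<in>C. \<forall>v\<in>C. u \<noteq> v \<longrightarrow> {u, v} \<in> E)"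

definition maximal_clique :: "'a set \<Rightarrow> 'a set set \<Rightarrow> 'a set \<Rightarrow> bool" where
  "maximal_clique V E C \<longleftrightarrow> clique V E C \<and> \<not> (\<exists>D. clique V E D \<and> C \<subset> D)"

definition is_tree :: "'b set \<Rightarrow> 'b set set \<Rightarrow> bool" where
  "is_tree N ET \<longleftrightarrow> simple_graph N ET \<and> N \<noteq> {} \<and> connected_on ET N \<and>
     \<not> (\<exists>xs. set xs \<subseteq> N \<and> is_cycle ET xs)"

definition tree_decomposition ::
  "'a set \<Rightarrow> 'a set set \<Rightarrow> 'b set \<Rightarrow> 'b set set \<Rightarrow> ('b \<Rightarrow> 'a set) \<Rightarrow> bool" where
  "tree_decomposition V E N ET l \<longleftrightarrow> is_tree N ET \<and>
     (\<forall>x\<in>N. l x \<subseteq> V) \<and>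
     (\<forall>v\<in>V. \<exists>x\<in>N. v \<in> l x) \<and>
     (\<forall>e\<in>E. \<exists>x\<in>N. e \<subseteq> l x) \<and>
     (\<forall>v\<in>V. connected_on ET {x \<in> N. v \<in> l x})"

definition k_connected :: "'a set \<Rightarrow> 'a set set \<Rightarrow> nat \<Rightarrow> bool" where
  "k_connected V E k \<longleftrightarrow> simple_graph V E \<and> card V > k \<and>
     (\<forall>S \<subseteq> V. card S < k \<longrightarrow> connected_on E (V - S))"

definition vertex_separator :: "'a set \<Rightarrow> 'a set set \<Rightarrow> 'a set \<Rightarrow> bool" where
  "vertex_separator V E S \<longleftrightarrow> S \<subseteq> V \<and> \<not> connected_on E (V - S)"

definition minimal_vertex_separator :: "'a set \<Rightarrow> 'a set set \<Rightarrow> 'a set \<Rightarrow> bool" where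
  "minimal_vertex_separator V E S \<longleftrightarrow> vertex_separator V E S \<and>
     (\<forall>S'. S' \<subset> S \<longrightarrow> \<not> vertex_separator V E S')"

end

theory Submission
  imports Defs "HOL-Library.Transitive_Closure_Table"
begin

text \<open>
  Every edge xy of the tree T splits T into two subtrees; a vertex of G lying in bags on both sides
  lies in l x and in l y by the subtree property, so when neither bag contains the other,
  l x \<inter> l y separates a vertex of l x - l y from a vertex of l y - l x.  Conversely, if S is a
  separator containing no l x \<inter> l y, then walking along T and using that bags are cliques,
  all of V - S becomes reachable from one vertex in G - S, a contradiction.  Hence the sets in M'
  are separators and every separator contains one of them, which identifies the inclusion-minimal
  elements of M' with the minimal separators.
\<close>

definition adj_rel :: "'a set set \<Rightarrow> 'a set \<Rightarrow> ('a \<times> 'a) set" where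
  "adj_rel E S = {(p, q). {p, q} \<in> E \<and> p \<in> S \<and> q \<in> S}"

lemma mem_adj_rel [simp]: "(p, q) \<in> adj_rel E S \<longleftrightarrow> {p, q} \<in> E \<and> p \<in> S \<and> q \<in> S"
  by (simp add: adj_rel_def)

lemma connected_on_adj_rel: "connected_on E S \<longleftrightarrow> (\<forall>u\<in>S. \<forall>v\<in>S. (u, v) \<in> (adj_rel E S)\<^sup>*)"
  by (simp add: connected_on_def adj_rel_def)

lemma rtrancl_adj_rel_in: "(u, v) \<in> (adj_rel E S)\<^sup>* \<Longrightarrow> u \<in> S \<Longrightarrow> v \<in> S"
  by (induction rule: rtrancl_induct) auto

lemma rtrancl_exits_set:
  assumes "(z, w) \<in> Q\<^sup>*" and "z \<in> T" and "w \<notin> T"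
  shows "\<exists>p q. (p, q) \<in> Q \<and> p \<in> T \<and> q \<notin> T"
  using assms
proof (induction rule: rtrancl_induct)
  case (step u w)
  then show ?case by (cases "u \<in> T") auto
qed simp

lemma tree_remove_edge_disconnects:
  assumes tree: "is_tree N ET" and e: "{x, y} \<in> ET" and xy: "x \<noteq> y" and xN: "x \<in> N"
  shows "(x, y) \<notin> (adj_rel (ET - {{x, y}}) N)\<^sup>*"
proof
  let ?R = "\<lambda>p q. (p, q) \<in> adj_rel (ET - {{x, y}}) N"
  assume "(x, y) \<in> (adj_rel (ET - {{x, y}}) N)\<^sup>*"
  then have "?R\<^sup>*\<^sup>* x y"
    by (simp del: mem_adj_rel add: rtranclp_rtrancl_eq)
  then obtain xs where "rtrancl_path ?R x xs y"
    by (auto simp: rtranclp_eq_rtrancl_path)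
  then obtain ys where path: "rtrancl_path ?R x ys y" and dist: "distinct (x # ys)"
    by (rule rtrancl_path_distinct)
  have "ys \<noteq> []"
    using path xy by (cases rule: rtrancl_path.cases) auto
  then have last_ys: "last ys = y"
    by (rule rtrancl_path_last[OF path])
  have long: "length ys \<ge> 2"
  proof (rule ccontr)
    assume "\<not> length ys \<ge> 2"
    with \<open>ys \<noteq> []\<close> obtain c where "ys = [c]"
      by (cases ys; cases "tl ys") auto
    with last_ys have "ys = [y]"
      by simp
    with path have "?R x y"
      by (cases rule: rtrancl_path.cases) auto
    then show False by simp
  qed
  let ?vs = "x # ys"
  have "set ?vs \<subseteq> N"
    using xN rtrancl_path_Range[OF path] by auto
  moreover have "is_cycle ET ?vs"
    unfolding is_cycle_def
  proof (intro conjI allI impI)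
    show "distinct ?vs" "3 \<le> length ?vs"
      using dist long by simp_all
    fix i assume i: "i < length ?vs"
    show "{?vs ! i, ?vs ! ((i + 1) mod length ?vs)} \<in> ET"
    proof (cases "i < length ys")
      case True
      then show ?thesis
        using rtrancl_path_nth[OF path True] by simp
    next
      case False
      with i have "i = length ys" by simp
      with \<open>ys \<noteq> []\<close> last_ys e show ?thesis
        by (simp add: last_conv_nth insert_commute)
    qed
  qed
  ultimately show False
    using tree unfolding is_tree_def by blast
qed

definition tree_side :: "'b set \<Rightarrow> 'b set set \<Rightarrow> 'b \<Rightarrow> 'b \<Rightarrow> 'b set" where
  "tree_side N ET x y = {z. (x, z) \<in> (adj_rel (ET - {{x, y}}) N)\<^sup>*}"

lemma tree_side_subset: "x \<in> N \<Longrightarrow> tree_side N ET x y \<subseteq> N"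
  unfolding tree_side_def using rtrancl_adj_rel_in by fast

lemma tree_side_exit_edge:
  assumes "p \<in> tree_side N ET x y" and "q \<in> N - tree_side N ET x y" and "{p, q} \<in> ET"
    and "x \<in> N"
  shows "{p, q} = {x, y}"
proof (rule ccontr)
  assume "{p, q} \<noteq> {x, y}"
  with assms have "(p, q) \<in> adj_rel (ET - {{x, y}}) N"
    using tree_side_subset by fastforce
  with assms(1) have "q \<in> tree_side N ET x y"
    unfolding tree_side_def by (simp add: rtrancl_into_rtrancl)
  with assms(2) show False by simp
qed

text \<open>Only the edge xy leaves the side of x, so the subtree of a vertex meeting both sides uses it.\<close>
lemma tree_decomposition_bags_across_edge:
  assumes td: "tree_decomposition V E N ET l" and xN: "x \<in> N"
    and v: "v \<in> V" and z: "z \<in> tree_side N ET x y" "v \<in> l z"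
    and w: "w \<in> N - tree_side N ET x y" "v \<in> l w"
  shows "v \<in> l x \<inter> l y"
proof -
  let ?Nv = "{z \<in> N. v \<in> l z}"
  have "z \<in> N"
    using z tree_side_subset[OF xN] by blast
  moreover have "connected_on ET ?Nv"
    using td v unfolding tree_decomposition_def by blast
  ultimately have "(z, w) \<in> (adj_rel ET ?Nv)\<^sup>*"
    using z w unfolding connected_on_adj_rel by blast
  from rtrancl_exits_set[OF this z(1)] w(1)
  obtain p q where pq: "(p, q) \<in> adj_rel ET ?Nv" "p \<in> tree_side N ET x y"
      "q \<notin> tree_side N ET x y"
    by blast
  then have "{p, q} = {x, y}"
    using tree_side_exit_edge[OF pq(2) _ _ xN] by simp
  with pq show ?thesis by (auto simp: doubleton_eq_iff)
qed

lemma tree_decomposition_edge_separates: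
  assumes td: "tree_decomposition V E N ET l"
    and xN: "x \<in> N" and yN: "y \<in> N" and e: "{x, y} \<in> ET"
    and a: "a \<in> l x - l y" and b: "b \<in> l y - l x"
  shows "vertex_separator V E (l x \<inter> l y)"
proof -
  let ?S = "l x \<inter> l y" and ?side = "tree_side N ET x y"
  have tree: "is_tree N ET" and bags: "\<forall>z\<in>N. l z \<subseteq> V" and edges: "\<forall>e\<in>E. \<exists>z\<in>N. e \<subseteq> l z"
    using td unfolding tree_decomposition_def by blast+
  have "x \<noteq> y"
    using a b by blast
  then have y_side: "y \<notin> ?side"
    using tree_remove_edge_disconnects[OF tree e _ xN] unfolding tree_side_def by blast
  have x_side: "x \<in> ?side"
    unfolding tree_side_def by simp
  define A where "A = {u \<in> V - ?S. \<forall>z\<in>N. u \<in> l z \<longrightarrow> z \<in> ?side}"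
  have "a \<in> A"
    using a xN bags tree_decomposition_bags_across_edge[OF td xN _ x_side] unfolding A_def by blast
  have "b \<notin> A"
    using b yN y_side unfolding A_def by blast
  have closed: "u \<in> A" if "(a, u) \<in> (adj_rel E (V - ?S))\<^sup>*" for u
    using that
  proof (induction rule: rtrancl_induct)
    case (step u w)
    then have uw: "{u, w} \<in> E" "w \<in> V - ?S" by auto
    then obtain z where z: "z \<in> N" "{u, w} \<subseteq> l z"
      using edges by blast
    with step.IH have "z \<in> ?side"
      unfolding A_def by blast
    with z uw show ?case
      unfolding A_def using tree_decomposition_bags_across_edge[OF td xN] by blast
  qed (use \<open>a \<in> A\<close> in simp)
  have "a \<in> V" "b \<in> V"
    using a b xN yN bags by blast+
  then have "\<not> connected_on E (V - ?S)"
    using a b closed \<open>b \<notin> A\<close> unfolding connected_on_adj_rel by blast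
  moreover have "?S \<subseteq> V"
    using xN bags by blast
  ultimately show ?thesis
    unfolding vertex_separator_def by blast
qed

lemma maximal_clique_subset_clique:
  "maximal_clique V E C \<Longrightarrow> clique V E D \<Longrightarrow> C \<subseteq> D \<Longrightarrow> C = D"
  unfolding maximal_clique_def by blast

lemma clique_tree_edge_separates:
  assumes td: "tree_decomposition V E N ET l"
    and mc: "\<forall>x\<in>N. maximal_clique V E (l x)" and inj: "inj_on l N"
    and xN: "x \<in> N" and yN: "y \<in> N" and e: "{x, y} \<in> ET"
  shows "vertex_separator V E (l x \<inter> l y)"
proof -
  have "simple_graph N ET"
    using td unfolding tree_decomposition_def is_tree_def by blast
  with e have "x \<noteq> y"
    unfolding simple_graph_def by (metis doubleton_eq_iff)
  then have "l x \<noteq> l y"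
    using inj xN yN by (meson inj_on_def)
  then have "\<not> l x \<subseteq> l y" "\<not> l y \<subseteq> l x"
    using mc xN yN maximal_clique_subset_clique unfolding maximal_clique_def by metis+
  then show ?thesis
    using tree_decomposition_edge_separates[OF td xN yN e] by blast
qed

lemma clique_reachable_in_complement:
  assumes "clique V E C" and "v \<in> C - S" and "(a, v) \<in> (adj_rel E (V - S))\<^sup>*"
    and "w \<in> C - S"
  shows "(a, w) \<in> (adj_rel E (V - S))\<^sup>*"
proof (cases "w = v")
  case False
  with assms have "(v, w) \<in> adj_rel E (V - S)"
    unfolding clique_def by auto
  with assms(3) show ?thesis by (rule rtrancl_into_rtrancl)
qed (use assms in simp)

lemma separator_contains_adjacent_bags_inter:
  assumes td: "tree_decomposition V E N ET l"
    and cl: "\<forall>x\<in>N. clique V E (l x)"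
    and sep: "vertex_separator V E S"
  shows "\<exists>x y. x \<in> N \<and> y \<in> N \<and> {x, y} \<in> ET \<and> l x \<inter> l y \<subseteq> S"
proof (rule ccontr)
  assume no_inter: "\<not> ?thesis"
  let ?G = "adj_rel E (V - S)"
  have tree_conn: "connected_on ET N" and cover: "\<forall>v\<in>V. \<exists>z\<in>N. v \<in> l z"
    using td unfolding tree_decomposition_def is_tree_def by blast+
  obtain a b where a: "a \<in> V - S" and b: "b \<in> V - S" and ab: "(a, b) \<notin> ?G\<^sup>*"
    using sep unfolding vertex_separator_def connected_on_adj_rel by blast
  obtain x0 where x0: "x0 \<in> N" "a \<in> l x0"
    using cover a by blast
  obtain z where z: "z \<in> N" "b \<in> l z"
    using cover b by blast
  have "\<forall>w \<in> l z' - S. (a, w) \<in> ?G\<^sup>*" if "(x0, z') \<in> (adj_rel ET N)\<^sup>*" for z'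
    using that
  proof (induction rule: rtrancl_induct)
    case base
    show ?case
      using clique_reachable_in_complement[of V E "l x0" a S a] cl x0 a by blast
  next
    case (step p q)
    then have "p \<in> N" "q \<in> N" "{p, q} \<in> ET" by auto
    then obtain v where "v \<in> l p \<inter> l q" "v \<notin> S"
      using no_inter by blast
    with step.IH show ?case
      using clique_reachable_in_complement[of V E "l q" v S a] cl \<open>q \<in> N\<close> by blast
  qed
  moreover have "(x0, z) \<in> (adj_rel ET N)\<^sup>*"
    using tree_conn x0 z unfolding connected_on_adj_rel by blast
  ultimately show False
    using z b ab by blast
qed

lemma minimal_members_eq_minimal_sets:
  assumes "\<And>Y. Y \<in> M \<Longrightarrow> P Y" and "\<And>S. P S \<Longrightarrow> \<exists>Z\<in>M. Z \<subseteq> S"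
  shows "{Y \<in> M. \<not> (\<exists>Z\<in>M. Z \<subset> Y)} = {S. P S \<and> (\<forall>S'. S' \<subset> S \<longrightarrow> \<not> P S')}"
proof (intro equalityI subsetI)
  fix Y assume "Y \<in> {Y \<in> M. \<not> (\<exists>Z\<in>M. Z \<subset> Y)}"
  then have Y: "Y \<in> M" "\<forall>Z\<in>M. \<not> Z \<subset> Y" by auto
  have "\<not> P S'" if "S' \<subset> Y" for S'
    using assms(2) Y(2) that by (meson subset_psubset_trans)
  with Y(1) assms(1) show "Y \<in> {S. P S \<and> (\<forall>S'. S' \<subset> S \<longrightarrow> \<not> P S')}"
    by blast
next
  fix S assume "S \<in> {S. P S \<and> (\<forall>S'. S' \<subset> S \<longrightarrow> \<not> P S')}"
  then have S: "P S" "\<forall>S'. S' \<subset> S \<longrightarrow> \<not> P S'" by auto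
  then obtain Z where "Z \<in> M" "Z \<subseteq> S"
    using assms(2) by blast
  with S(2) assms(1) have "S \<in> M"
    by (metis psubset_eq)
  with S(2) assms(1) show "S \<in> {Y \<in> M. \<not> (\<exists>Z\<in>M. Z \<subset> Y)}"
    by blast
qed

theorem theorem1:
  fixes V :: "'a set" and E :: "'a set set" and k :: nat
    and N :: "'b set" and ET :: "'b set set" and l :: "'b \<Rightarrow> 'a set"
  assumes "chordal V E"
    and "k_connected V E k"
    and "tree_decomposition V E N ET l"
    and "\<forall>x\<in>N. maximal_clique V E (l x)"
    and "inj_on l N"
  shows "{Y \<in> {l x \<inter> l y | x y. x \<in> N \<and> y \<in> N \<and> {x, y} \<in> ET}.
            \<not> (\<exists>Z \<in> {l x \<inter> l y | x y. x \<in> N \<and> y \<in> N \<and> {x, y} \<in> ET}. Z \<subset> Y)}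
         = {S. minimal_vertex_separator V E S}"
proof -
  let ?M = "{l x \<inter> l y | x y. x \<in> N \<and> y \<in> N \<and> {x, y} \<in> ET}"
  have "vertex_separator V E Y" if "Y \<in> ?M" for Y
  proof -
    from that obtain x y where "Y = l x \<inter> l y" "x \<in> N" "y \<in> N" "{x, y} \<in> ET"
      by blast
    then show ?thesis
      using clique_tree_edge_separates[OF assms(3-5)] by simp
  qed
  moreover have "\<exists>Z\<in>?M. Z \<subseteq> S" if sep: "vertex_separator V E S" for S
  proof -
    have "\<forall>x\<in>N. clique V E (l x)"
      using assms(4) unfolding maximal_clique_def by blast
    then obtain x y where "x \<in> N" "y \<in> N" "{x, y} \<in> ET" "l x \<inter> l y \<subseteq> S"
      using separator_contains_adjacent_bags_inter[OF assms(3) _ sep] by blast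
    then show ?thesis
      by blast
  qed
  ultimately show ?thesis
    unfolding minimal_vertex_separator_def by (rule minimal_members_eq_minimal_sets)
qed

end
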